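(* Let $G$ be a block graph with at least one edge and let $H$ be a maximal co-interval subgraph of $G$. Then there exist a block $Q$ of $G$ and vertices $u,v\in V(Q)$ (possibly $u=v$) such that $E(H)=E(Q_{u,v}(G))$.
   Context: All graphs are finite and simple. A block of a graph is a maximal connected subgraph that has no cut-vertex of its own; a block graph is a graph in which every block is complete. For a vertex $x$, $N_G(x)$ is its neighbourhood and $\delta_G(x)$ its set of incident edges. For a clique $Q$ in $G$ and $u,v\in V(Q)$, the big ant $Q_{u,v}(G)=\big(V(Q)\cup N_G(u)\cup N_G(v),\ E(Q)\cup\delta_G(u)\cup\delta_G(v)\big)$. A graph $H$ is co-interval if there is a map $I$ from $V(H)$ to closed real intervals with $xy\in E(H)$ iff $I(x)\cap I(y)=\emptyset$ for distinct $x,y$. A co-interval subgraph $H$ of $G$ is maximal if there is no co-interval subgraph $H'$ of $G$ with $E(H)\subsetneq E(H')$ (maximality refers only to edge sets; isolated vertices are disregarded). *)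

theory Defs
  imports Complex_Main
begin

type_synonym 'a graph = "'a set \<times> 'a set set"

definition verts :: "'a graph \<Rightarrow> 'a set" where "verts G = fst G"
definition edges :: "'a graph \<Rightarrow> 'a set set" where "edges G = snd G"

definition graph :: "'a graph \<Rightarrow> bool" where
  "graph G \<longleftrightarrow> finite (verts G) \<and>
     (\<forall>e\<in>edges G. \<exists>x y. x \<noteq> y \<and> e = {x, y} \<and> x \<in> verts G \<and> y \<in> verts G)"

definition subgraph :: "'a graph \<Rightarrow> 'a graph \<Rightarrow> bool" where
  "subgraph H G \<longleftrightarrow> graph H \<and> verts H \<subseteq> verts G \<and> edges H \<subseteq> edges G"

definition reachable :: "'a graph \<Rightarrow> 'a \<Rightarrow> 'a \<Rightarrow> bool" where
  "reachable G = (\<lambda>x y. {x, y} \<in> edges G)\<^sup>*\<^sup>*"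

definition connected :: "'a graph \<Rightarrow> bool" where
  "connected G \<longleftrightarrow> verts G \<noteq> {} \<and> (\<forall>x\<in>verts G. \<forall>y\<in>verts G. reachable G x y)"

definition delete_vertex :: "'a graph \<Rightarrow> 'a \<Rightarrow> 'a graph" where
  "delete_vertex G x = (verts G - {x}, {e \<in> edges G. x \<notin> e})"

text \<open>A cut-vertex: its removal increases the number of components, i.e. it separates two
  other vertices that were in the same component.\<close>
definition cut_vertex :: "'a graph \<Rightarrow> 'a \<Rightarrow> bool" where
  "cut_vertex G x \<longleftrightarrow> x \<in> verts G \<and>
     (\<exists>y\<in>verts G - {x}. \<exists>z\<in>verts G - {x}. reachable G y z \<and> \<not> reachable (delete_vertex G x) y z)"

definition biconn :: "'a graph \<Rightarrow> bool" where
  "biconn B \<longleftrightarrow> connected B \<and> (\<nexists>x. cut_vertex B x)"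

definition block :: "'a graph \<Rightarrow> 'a graph \<Rightarrow> bool" where
  "block G B \<longleftrightarrow> subgraph B G \<and> biconn B \<and>
     (\<forall>B'. subgraph B' G \<and> biconn B' \<and> verts B \<subseteq> verts B' \<and> edges B \<subseteq> edges B' \<longrightarrow> B' = B)"

definition complete :: "'a graph \<Rightarrow> bool" where
  "complete B \<longleftrightarrow> (\<forall>x\<in>verts B. \<forall>y\<in>verts B. x \<noteq> y \<longrightarrow> {x, y} \<in> edges B)"

definition block_graph :: "'a graph \<Rightarrow> bool" where
  "block_graph G \<longleftrightarrow> graph G \<and> (\<forall>B. block G B \<longrightarrow> complete B)"

definition nbhd :: "'a graph \<Rightarrow> 'a \<Rightarrow> 'a set" where
  "nbhd G x = {y. {x, y} \<in> edges G}"

definition incident :: "'a graph \<Rightarrow> 'a \<Rightarrow> 'a set set" where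
  "incident G x = {e \<in> edges G. x \<in> e}"

definition big_ant :: "'a graph \<Rightarrow> 'a graph \<Rightarrow> 'a \<Rightarrow> 'a \<Rightarrow> 'a graph" where
  "big_ant G Q u v = (verts Q \<union> nbhd G u \<union> nbhd G v, edges Q \<union> incident G u \<union> incident G v)"

definition co_interval :: "'a graph \<Rightarrow> bool" where
  "co_interval H \<longleftrightarrow> (\<exists>I :: 'a \<Rightarrow> real set.
     (\<forall>x\<in>verts H. \<exists>a b. a \<le> b \<and> I x = {a..b}) \<and>
     (\<forall>x\<in>verts H. \<forall>y\<in>verts H. x \<noteq> y \<longrightarrow> ({x, y} \<in> edges H \<longleftrightarrow> I x \<inter> I y = {})))"

definition max_co_interval_subgraph :: "'a graph \<Rightarrow> 'a graph \<Rightarrow> bool" where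
  "max_co_interval_subgraph G H \<longleftrightarrow> subgraph H G \<and> co_interval H \<and>
     (\<nexists>H'. subgraph H' G \<and> co_interval H' \<and> edges H \<subset> edges H')"

end

theory Submission
  imports Defs
begin

(* Let H have an interval model with endpoints l x \<le> r x, let p be a vertex whose interval
   ends first and q one whose interval starts last. Every edge x y of H with r x < l y then
   has x = p, or y = q, or p y and x q are edges of H as well; in the last case q x y p is a
   path in G between the two vertices p, q of the block Q containing the edge p q, so x y is an
   edge of Q. Hence E(H) is contained in the big ant Q_{p,q}(G). Conversely every big ant on a
   clique is co-interval (put p rightmost, q leftmost and the clique in between), so
   maximality of H gives equality. *)

lemma reachable_refl: "reachable G x x"
  unfolding reachable_def by simp

lemma reachable_edge: "{x, y} \<in> edges G \<Longrightarrow> reachable G x y"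
  unfolding reachable_def by auto

lemma reachable_trans: "reachable G x y \<Longrightarrow> reachable G y z \<Longrightarrow> reachable G x z"
  unfolding reachable_def by simp

lemma reachable_sym: "reachable G x y \<Longrightarrow> reachable G y x"
proof -
  have "symp (\<lambda>x y. {x, y} \<in> edges G)"
    by (auto intro: sympI simp: insert_commute)
  then show "reachable G x y \<Longrightarrow> reachable G y x"
    unfolding reachable_def by (meson symp_rtranclp sympD)
qed

lemma reachable_mono: "edges G \<subseteq> edges G' \<Longrightarrow> reachable G x y \<Longrightarrow> reachable G' x y"
  unfolding reachable_def by (metis (mono_tags, lifting) mono_rtranclp subsetD)

lemma graph_edgeE:
  assumes "graph G" "e \<in> edges G"
  obtains x y where "x \<noteq> y" "e = {x, y}" "x \<in> verts G" "y \<in> verts G"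
  using assms unfolding graph_def by blast

lemma graph_edges_nonemptyE:
  assumes "graph G" "edges G \<noteq> {}"
  obtains x y where "x \<noteq> y" "{x, y} \<in> edges G" "x \<in> verts G" "y \<in> verts G"
proof -
  obtain e where "e \<in> edges G"
    using assms(2) by blast
  with assms(1) show ?thesis
    by (metis graph_edgeE that)
qed

lemma graph_edge_subset: "graph G \<Longrightarrow> e \<in> edges G \<Longrightarrow> e \<subseteq> verts G"
  by (auto elim: graph_edgeE)

lemma finite_edges: "graph G \<Longrightarrow> finite (edges G)"
  by (rule finite_subset[of _ "Pow (verts G)"]) (auto simp: graph_def dest: graph_edge_subset)

lemma edges_delete_vertex: "edges (delete_vertex G z) = {e \<in> edges G. z \<notin> e}"
  by (simp add: delete_vertex_def edges_def)

lemma reachable_delete_vertex_edge: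
  "{x, y} \<in> edges G \<Longrightarrow> z \<noteq> x \<Longrightarrow> z \<noteq> y \<Longrightarrow> reachable (delete_vertex G z) x y"
  by (rule reachable_edge) (simp add: edges_delete_vertex)

lemma reachable_delete_vertex_mono:
  "edges G \<subseteq> edges G' \<Longrightarrow> reachable (delete_vertex G z) x y \<Longrightarrow> reachable (delete_vertex G' z) x y"
  by (erule reachable_mono[rotated]) (auto simp: edges_delete_vertex)

lemma biconn_reachable_delete_vertex:
  assumes "graph B" "biconn B" "x \<in> verts B - {z}" "y \<in> verts B - {z}"
  shows "reachable (delete_vertex B z) x y"
proof -
  have "reachable B x y"
    using assms(2-4) by (auto simp: biconn_def Defs.connected_def)
  show ?thesis
  proof (cases "z \<in> verts B")
    case True
    with assms \<open>reachable B x y\<close> show ?thesis by (auto simp: biconn_def cut_vertex_def)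
  next
    case False
    then have "edges (delete_vertex B z) = edges B"
      using graph_edge_subset[OF assms(1)] by (auto simp: edges_delete_vertex)
    with \<open>reachable B x y\<close> show ?thesis by (simp add: reachable_def)
  qed
qed

lemma biconn_extend:
  assumes "graph B" "biconn B" "verts B \<subseteq> verts B'" "edges B \<subseteq> edges B'"
    and attached: "\<And>z w. z \<in> verts B' \<Longrightarrow> w \<in> verts B' - {z} \<Longrightarrow>
      \<exists>b\<in>verts B - {z}. reachable (delete_vertex B' z) w b"
  shows "biconn B'"
proof -
  have reach_inside: "reachable (delete_vertex B' z) w1 w2"
    if w: "z \<in> verts B'" "w1 \<in> verts B' - {z}" "w2 \<in> verts B' - {z}" for z w1 w2
  proof -
    obtain b1 b2 where b: "b1 \<in> verts B - {z}" "b2 \<in> verts B - {z}"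
      and r: "reachable (delete_vertex B' z) w1 b1" "reachable (delete_vertex B' z) w2 b2"
      using attached w by meson
    have "reachable (delete_vertex B' z) b1 b2"
      by (rule reachable_delete_vertex_mono[OF assms(4) biconn_reachable_delete_vertex[OF assms(1,2) b]])
    then show ?thesis
      using r by (meson reachable_sym reachable_trans)
  qed
  have cB: "connected B"
    using assms(2) by (simp add: biconn_def)
  have reach_B: "\<exists>b\<in>verts B. reachable B' w b" if "w \<in> verts B'" for w
  proof (cases "w \<in> verts B")
    case True
    then show ?thesis by (blast intro: reachable_refl)
  next
    case False
    obtain b0 where "b0 \<in> verts B"
      using cB by (auto simp: Defs.connected_def)
    with False attached[of b0 w] assms(3) that obtain b where "b \<in> verts B"
      "reachable (delete_vertex B' b0) w b"
      by blast
    moreover have "edges (delete_vertex B' b0) \<subseteq> edges B'"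
      by (auto simp: edges_delete_vertex)
    ultimately show ?thesis
      by (blast intro: reachable_mono)
  qed
  have "connected B'"
    unfolding Defs.connected_def
  proof (intro conjI ballI)
    show "verts B' \<noteq> {}"
      using cB assms(3) by (auto simp: Defs.connected_def)
    fix w1 w2 assume "w1 \<in> verts B'" "w2 \<in> verts B'"
    then obtain b1 b2 where b: "b1 \<in> verts B" "b2 \<in> verts B"
      and r: "reachable B' w1 b1" "reachable B' w2 b2"
      using reach_B by meson
    have "reachable B b1 b2"
      using cB b by (simp add: Defs.connected_def)
    then have "reachable B' b1 b2"
      by (rule reachable_mono[OF assms(4)])
    with r show "reachable B' w1 w2"
      by (meson reachable_sym reachable_trans)
  qed
  moreover have "\<not> cut_vertex B' z" for z
    using reach_inside unfolding cut_vertex_def by blast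
  ultimately show ?thesis
    by (simp add: biconn_def)
qed

definition edge_graph :: "'a \<Rightarrow> 'a \<Rightarrow> 'a graph" where
  "edge_graph a b = ({a, b}, {{a, b}})"

lemma verts_edge_graph [simp]: "verts (edge_graph a b) = {a, b}"
  and edges_edge_graph [simp]: "edges (edge_graph a b) = {{a, b}}"
  by (simp_all add: edge_graph_def verts_def edges_def)

lemma subgraph_edge_graph:
  assumes "graph G" "{a, b} \<in> edges G" "a \<noteq> b"
  shows "subgraph (edge_graph a b) G"
proof -
  have "{a, b} \<subseteq> verts G"
    by (rule graph_edge_subset[OF assms(1,2)])
  with assms show ?thesis
    by (auto simp: subgraph_def graph_def)
qed

lemma biconn_edge_graph: "a \<noteq> b \<Longrightarrow> biconn (edge_graph a b)"
  by (auto simp: biconn_def Defs.connected_def cut_vertex_def reachable_refl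
      intro: reachable_edge reachable_sym)

lemma biconn_subgraph_in_block:
  assumes G: "graph G" and B: "subgraph B G" "biconn B"
  shows "\<exists>Q. block G Q \<and> verts B \<subseteq> verts Q \<and> edges B \<subseteq> edges Q"
proof -
  define P where "P B' \<longleftrightarrow> subgraph B' G \<and> biconn B' \<and> verts B \<subseteq> verts B' \<and> edges B \<subseteq> edges B'"
    for B'
  define size :: "'a graph \<Rightarrow> nat" where "size B' = card (verts B') + card (edges B')" for B'
  have size_mono: "size B' \<le> size B''"
    if "graph B''" "verts B' \<subseteq> verts B''" "edges B' \<subseteq> edges B''" for B' B''
    using that finite_edges[OF that(1)] by (auto simp: size_def graph_def intro!: add_mono card_mono)
  have "P B"
    using B by (simp add: P_def)
  moreover have "size B' < size G + 1" if "P B'" for B'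
  proof -
    have "verts B' \<subseteq> verts G" "edges B' \<subseteq> edges G"
      using that by (auto simp: P_def subgraph_def)
    then show ?thesis
      using size_mono[OF G] by (simp add: less_Suc_eq_le)
  qed
  ultimately obtain Q where Q: "P Q" and Q_max: "\<And>B'. P B' \<Longrightarrow> size B' \<le> size Q"
    using ex_has_greatest_nat[of P B size "size G + 1"] by blast
  have "B' = Q" if "subgraph B' G" "biconn B'" "verts Q \<subseteq> verts B'" "edges Q \<subseteq> edges B'" for B'
  proof -
    have "graph B'" "P B'"
      using Q that by (auto simp: P_def subgraph_def)
    then have "size B' \<le> size Q"
      using Q_max by blast
    with \<open>graph B'\<close> have "card (verts Q) = card (verts B')" "card (edges Q) = card (edges B')"
      using that(3,4) finite_edges[of B'] card_mono[of "verts B'" "verts Q"]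
        card_mono[of "edges B'" "edges Q"]
      by (auto simp: size_def graph_def)
    then have "verts Q = verts B'" "edges Q = edges B'"
      using that(3,4) \<open>graph B'\<close> finite_edges[of B'] by (simp_all add: graph_def card_subset_eq)
    then show ?thesis
      by (simp add: verts_def edges_def prod_eq_iff)
  qed
  with Q have "block G Q"
    unfolding block_def P_def by blast
  with Q show ?thesis
    unfolding P_def by blast
qed

lemma block_containing_edge:
  assumes "graph G" "{a, b} \<in> edges G" "a \<noteq> b"
  obtains Q where "block G Q" "a \<in> verts Q" "b \<in> verts Q"
  using biconn_subgraph_in_block[OF assms(1) subgraph_edge_graph[OF assms] biconn_edge_graph[OF assms(3)]]
  by auto

lemma blockD: "block G Q \<Longrightarrow> subgraph Q G" "block G Q \<Longrightarrow> biconn Q"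
  unfolding block_def by blast+

lemma ear_in_block:
  assumes G: "graph G" and Q: "block G Q" "p \<in> verts Q" "q \<in> verts Q"
    and distinct: "distinct [p, q, x, y]"
    and ear: "{q, x} \<in> edges G" "{x, y} \<in> edges G" "{y, p} \<in> edges G"
  shows "{x, y} \<in> edges Q"
proof -
  (* Q together with the path q x y p is still biconnected, so by maximality it is Q itself. *)
  define B' where "B' = (verts Q \<union> {x, y}, edges Q \<union> {{q, x}, {x, y}, {y, p}})"
  have verts_B': "verts B' = verts Q \<union> {x, y}" and edges_B': "edges B' = edges Q \<union> {{q, x}, {x, y}, {y, p}}"
    by (simp_all add: B'_def verts_def edges_def)
  have QG: "subgraph Q G" "biconn Q"
    using Q(1) by (rule blockD)+
  then have gQ: "graph Q"
    by (simp add: subgraph_def)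
  have "graph B'"
    unfolding graph_def verts_B' edges_B'
  proof (intro conjI ballI)
    show "finite (verts Q \<union> {x, y})"
      using gQ by (simp add: graph_def)
    fix e assume "e \<in> edges Q \<union> {{q, x}, {x, y}, {y, p}}"
    then consider "e \<in> edges Q" | "e = {q, x}" | "e = {x, y}" | "e = {y, p}"
      by blast
    then show "\<exists>a b. a \<noteq> b \<and> e = {a, b} \<and> a \<in> verts Q \<union> {x, y} \<and> b \<in> verts Q \<union> {x, y}"
    proof cases
      case 1
      with gQ show ?thesis
        by (elim graph_edgeE) blast+
    qed (use Q(2,3) distinct in auto)
  qed
  moreover have "{x, y} \<subseteq> verts G"
    by (rule graph_edge_subset[OF G ear(2)])
  ultimately have "subgraph B' G"
    using QG(1) ear unfolding subgraph_def verts_B' edges_B' by blast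
  have Q_B': "verts Q \<subseteq> verts B'" "edges Q \<subseteq> edges B'"
    by (auto simp: verts_B' edges_B')
  have "biconn B'"
  proof (rule biconn_extend[OF gQ QG(2) Q_B'])
    fix z w assume "z \<in> verts B'" "w \<in> verts B' - {z}"
    let ?D = "delete_vertex B' z"
    have "{x, q} \<in> edges B'" "{x, y} \<in> edges B'" "{y, p} \<in> edges B'"
      by (simp_all add: edges_B' insert_commute)
    then have qx: "z \<noteq> q \<Longrightarrow> z \<noteq> x \<Longrightarrow> reachable ?D x q"
      and xy: "z \<noteq> x \<Longrightarrow> z \<noteq> y \<Longrightarrow> reachable ?D x y"
      and yp: "z \<noteq> y \<Longrightarrow> z \<noteq> p \<Longrightarrow> reachable ?D y p"
      by (simp_all add: reachable_delete_vertex_edge)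
    consider "w \<in> verts Q" | "w = x" "w \<notin> verts Q" | "w = y" "w \<notin> verts Q"
      using \<open>w \<in> verts B' - {z}\<close> verts_B' by blast
    then show "\<exists>b\<in>verts Q - {z}. reachable ?D w b"
    proof cases
      case 1
      with \<open>w \<in> verts B' - {z}\<close> have "w \<in> verts Q - {z}"
        by blast
      then show ?thesis
        by (intro bexI[of _ w] reachable_refl)
    next
      case 2
      then show ?thesis
        using \<open>w \<in> verts B' - {z}\<close> Q(2,3) distinct qx xy yp
        by (cases "z = q") (auto intro: reachable_trans)
    next
      case 3
      then show ?thesis
        using \<open>w \<in> verts B' - {z}\<close> Q(2,3) distinct qx xy yp
        by (cases "z = p") (auto intro: reachable_trans reachable_sym)
    qed
  qed
  with \<open>subgraph B' G\<close> Q_B' have "B' = Q"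
    using Q(1) unfolding block_def by blast
  moreover have "{x, y} \<in> edges B'"
    by (simp add: edges_B')
  ultimately show ?thesis
    by simp
qed

definition co_interval_model :: "'a graph \<Rightarrow> ('a \<Rightarrow> real) \<Rightarrow> ('a \<Rightarrow> real) \<Rightarrow> bool" where
  "co_interval_model H l r \<longleftrightarrow> (\<forall>x\<in>verts H. l x \<le> r x) \<and>
     (\<forall>x\<in>verts H. \<forall>y\<in>verts H. x \<noteq> y \<longrightarrow> ({x, y} \<in> edges H \<longleftrightarrow> r x < l y \<or> r y < l x))"

lemma co_interval_iff_model: "co_interval H \<longleftrightarrow> (\<exists>l r. co_interval_model H l r)"
proof
  assume "co_interval H"
  then obtain I :: "'a \<Rightarrow> real set" where
    I: "\<forall>x\<in>verts H. \<exists>a b. a \<le> b \<and> I x = {a..b}"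
    and I_edges: "\<forall>x\<in>verts H. \<forall>y\<in>verts H. x \<noteq> y \<longrightarrow> ({x, y} \<in> edges H \<longleftrightarrow> I x \<inter> I y = {})"
    unfolding co_interval_def by blast
  obtain l where "\<forall>x\<in>verts H. \<exists>b. l x \<le> b \<and> I x = {l x..b}"
    using bchoice[OF I] by blast
  then obtain r where lr: "\<forall>x\<in>verts H. l x \<le> r x \<and> I x = {l x..r x}"
    using bchoice[of "verts H"] by meson
  have "co_interval_model H l r"
    unfolding co_interval_model_def
  proof (intro conjI ballI impI)
    fix x y assume xy: "x \<in> verts H" "y \<in> verts H" "x \<noteq> y"
    then show "{x, y} \<in> edges H \<longleftrightarrow> r x < l y \<or> r y < l x"
      using I_edges lr[rule_format, OF xy(1)] lr[rule_format, OF xy(2)]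
      by auto
  qed (use lr in blast)
  then show "\<exists>l r. co_interval_model H l r"
    by blast
next
  assume "\<exists>l r. co_interval_model H l r"
  then obtain l r where "co_interval_model H l r"
    by blast
  then show "co_interval H"
    unfolding co_interval_def co_interval_model_def
    by (intro exI[of _ "\<lambda>x. {l x..r x}"]) auto
qed

lemma max_co_interval_subgraphD:
  "max_co_interval_subgraph G H \<Longrightarrow> subgraph H' G \<Longrightarrow> co_interval H' \<Longrightarrow> \<not> edges H \<subset> edges H'"
  unfolding max_co_interval_subgraph_def by blast

lemma co_interval_edge_graph: "co_interval (edge_graph a b)"
proof -
  define l :: "'a \<Rightarrow> real" where "l z = (if z = a then 0 else 1)" for z
  have "co_interval_model (edge_graph a b) l l"
    by (auto simp: co_interval_model_def l_def insert_commute)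
  then show ?thesis
    by (auto simp: co_interval_iff_model)
qed

lemma max_co_interval_subgraph_edges_nonempty:
  assumes "graph G" "edges G \<noteq> {}" "max_co_interval_subgraph G H"
  shows "edges H \<noteq> {}"
proof
  assume "edges H = {}"
  obtain a b where "a \<noteq> b" "{a, b} \<in> edges G"
    using assms(1,2) by (rule graph_edges_nonemptyE)
  then have "subgraph (edge_graph a b) G"
    by (rule subgraph_edge_graph[OF assms(1), rotated])
  moreover have "edges H \<subset> edges (edge_graph a b)"
    using \<open>edges H = {}\<close> by auto
  ultimately show False
    using max_co_interval_subgraphD[OF assms(3) _ co_interval_edge_graph] by blast
qed

lemma co_interval_model_extremes:
  assumes H: "graph H" "co_interval_model H l r" "edges H \<noteq> {}"
  obtains p q where "{p, q} \<in> edges H" "p \<noteq> q" "p \<in> verts H" "q \<in> verts H"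
    "\<forall>x\<in>verts H. r p \<le> r x" "\<forall>x\<in>verts H. l x \<le> l q"
proof -
  obtain x y where xy: "x \<noteq> y" "{x, y} \<in> edges H" "x \<in> verts H" "y \<in> verts H"
    using H(1,3) by (rule graph_edges_nonemptyE)
  have fin: "finite (verts H)" and ne: "verts H \<noteq> {}"
    using H(1) xy(3) by (auto simp: graph_def)
  have "Min (r ` verts H) \<in> r ` verts H"
    using fin ne by simp
  then obtain p where "p \<in> verts H" "r p = Min (r ` verts H)"
    by (metis imageE)
  then have p: "p \<in> verts H" "\<forall>x\<in>verts H. r p \<le> r x"
    using fin by simp_all
  have "Max (l ` verts H) \<in> l ` verts H"
    using fin ne by simp
  then obtain q where "q \<in> verts H" "l q = Max (l ` verts H)"
    by (metis imageE)
  then have q: "q \<in> verts H" "\<forall>x\<in>verts H. l x \<le> l q"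
    using fin by simp_all
  have "r x < l y \<or> r y < l x"
    using H(2) xy unfolding co_interval_model_def by blast
  then have "r p < l q"
    using p q xy(3,4) by force
  moreover have "l p \<le> r p"
    using H(2) p(1) by (simp add: co_interval_model_def)
  ultimately have "p \<noteq> q"
    by auto
  with \<open>r p < l q\<close> have "{p, q} \<in> edges H"
    using H(2) p(1) q(1) unfolding co_interval_model_def by blast
  with that p q \<open>p \<noteq> q\<close> show ?thesis
    by blast
qed

lemma verts_big_ant: "verts (big_ant G Q u v) = verts Q \<union> nbhd G u \<union> nbhd G v"
  and edges_big_ant: "edges (big_ant G Q u v) = edges Q \<union> incident G u \<union> incident G v"
  by (simp_all add: big_ant_def verts_def edges_def)

lemma incidentE:
  assumes "graph G" "e \<in> incident G u"
  obtains w where "w \<noteq> u" "e = {u, w}" "w \<in> nbhd G u"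
proof -
  obtain x y where "x \<noteq> y" "e = {x, y}" "e \<in> edges G" "u \<in> e"
    using assms by (auto simp: incident_def elim: graph_edgeE)
  then consider "u = x" | "u = y"
    by blast
  then show ?thesis
  proof cases
    case 1
    with that[of y] \<open>x \<noteq> y\<close> \<open>e = {x, y}\<close> \<open>e \<in> edges G\<close> show ?thesis
      by (simp add: nbhd_def)
  next
    case 2
    with that[of x] \<open>x \<noteq> y\<close> \<open>e = {x, y}\<close> \<open>e \<in> edges G\<close> show ?thesis
      by (simp add: nbhd_def insert_commute)
  qed
qed

lemma nbhd_subset_verts: "graph G \<Longrightarrow> nbhd G u \<subseteq> verts G"
  by (auto simp: nbhd_def dest: graph_edge_subset)

lemma subgraph_big_ant:
  assumes G: "graph G" and Q: "subgraph Q G" "u \<in> verts Q" "v \<in> verts Q"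
  shows "subgraph (big_ant G Q u v) G"
proof -
  have gQ: "graph Q" and QG: "verts Q \<subseteq> verts G" "edges Q \<subseteq> edges G"
    using Q(1) by (simp_all add: subgraph_def)
  have verts_G: "verts (big_ant G Q u v) \<subseteq> verts G"
    using QG(1) nbhd_subset_verts[OF G] by (auto simp: verts_big_ant)
  have "graph (big_ant G Q u v)"
    unfolding graph_def
  proof (intro conjI ballI)
    show "finite (verts (big_ant G Q u v))"
      using verts_G G by (auto simp: graph_def intro: finite_subset)
    fix e assume "e \<in> edges (big_ant G Q u v)"
    then consider "e \<in> edges Q" | "e \<in> incident G u" | "e \<in> incident G v"
      by (auto simp: edges_big_ant)
    then show "\<exists>x y. x \<noteq> y \<and> e = {x, y} \<and> x \<in> verts (big_ant G Q u v) \<and> y \<in> verts (big_ant G Q u v)"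
    proof cases
      case 1
      with gQ show ?thesis
        by (elim graph_edgeE) (auto simp: verts_big_ant)
    next
      case 2
      with G show ?thesis
        by (elim incidentE) (use Q(2) in \<open>auto simp: verts_big_ant\<close>)
    next
      case 3
      with G show ?thesis
        by (elim incidentE) (use Q(3) in \<open>auto simp: verts_big_ant\<close>)
    qed
  qed
  with verts_G QG(2) show ?thesis
    by (auto simp: subgraph_def edges_big_ant incident_def)
qed

lemma edges_big_ant_iff:
  assumes "graph Q" "complete Q" "x \<noteq> y"
  shows "{x, y} \<in> edges (big_ant G Q u v) \<longleftrightarrow>
    x \<in> verts Q \<and> y \<in> verts Q \<or> {x, y} \<in> edges G \<and> (u \<in> {x, y} \<or> v \<in> {x, y})"
  using assms graph_edge_subset[OF assms(1), of "{x, y}"]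
  by (auto simp: edges_big_ant incident_def complete_def)

lemma co_interval_big_ant:
  assumes G: "graph G" and Q: "subgraph Q G" "complete Q" "u \<in> verts Q" "v \<in> verts Q"
  shows "co_interval (big_ant G Q u v)"
proof -
  have gQ: "graph Q"
    using Q(1) by (simp add: subgraph_def)
  have verts_G: "verts (big_ant G Q u v) \<subseteq> verts G"
    using subgraph_big_ant[OF G Q(1,3,4)] by (simp add: subgraph_def)
  have "finite (verts G)"
    using G by (simp add: graph_def)
  then obtain g :: "'a \<Rightarrow> nat" and n where g: "g ` verts G = {i. i < n}" "inj_on g (verts G)"
    by (metis finite_imp_inj_to_nat_seg)
  define N where "N = real n"
  (* u is the point N + 4, v the point 0, the other vertices of Q are distinct points in
     between, and each remaining vertex gets an interval covering [1, N + 3] that reaches the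
     point of u (of v) iff it is not adjacent to u (to v). *)
  define l where "l z = (if z = u then N + 4 else if z = v then 0 else if z \<in> verts Q then 2 + real (g z)
      else if {v, z} \<in> edges G then 1 else 0)" for z
  define r where "r z = (if z = u then N + 4 else if z = v then 0 else if z \<in> verts Q then 2 + real (g z)
      else if {u, z} \<in> edges G then N + 3 else N + 4)" for z
  have "co_interval_model (big_ant G Q u v) l r"
    unfolding co_interval_model_def
  proof (intro conjI ballI impI)
    fix x assume "x \<in> verts (big_ant G Q u v)"
    show "l x \<le> r x"
      by (simp add: l_def r_def N_def)
  next
    fix x y assume x: "x \<in> verts (big_ant G Q u v)" and y: "y \<in> verts (big_ant G Q u v)" and "x \<noteq> y"
    have "real (g x) < N" "real (g y) < N" "g x \<noteq> g y"
      using x y \<open>x \<noteq> y\<close> verts_G g unfolding N_def inj_on_def by auto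
    moreover have "x \<notin> verts Q \<Longrightarrow> {u, x} \<in> edges G \<or> {v, x} \<in> edges G"
      and "y \<notin> verts Q \<Longrightarrow> {u, y} \<in> edges G \<or> {v, y} \<in> edges G"
      using x y by (auto simp: verts_big_ant nbhd_def)
    ultimately show "{x, y} \<in> edges (big_ant G Q u v) \<longleftrightarrow> r x < l y \<or> r y < l x"
      unfolding edges_big_ant_iff[OF gQ Q(2) \<open>x \<noteq> y\<close>] l_def r_def
      using \<open>x \<noteq> y\<close> Q(3,4) by (auto simp: insert_commute)
  qed
  then show ?thesis
    by (auto simp: co_interval_iff_model)
qed

lemma edges_subset_big_ant:
  assumes G: "graph G" and H: "subgraph H G" "co_interval_model H l r"
    and Q: "block G Q" "p \<in> verts Q" "q \<in> verts Q" "p \<noteq> q"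
    and p: "p \<in> verts H" "\<forall>x\<in>verts H. r p \<le> r x"
    and q: "q \<in> verts H" "\<forall>x\<in>verts H. l x \<le> l q"
  shows "edges H \<subseteq> edges (big_ant G Q p q)"
proof -
  have HG: "edges H \<subseteq> edges G"
    using H(1) by (simp add: subgraph_def)
  have lr: "\<forall>x\<in>verts H. l x \<le> r x"
    and edge_iff: "\<forall>x\<in>verts H. \<forall>y\<in>verts H. x \<noteq> y \<longrightarrow> ({x, y} \<in> edges H \<longleftrightarrow> r x < l y \<or> r y < l x)"
    using H(2) by (simp_all add: co_interval_model_def)
  have left_right: "{x, y} \<in> edges (big_ant G Q p q)"
    if x: "x \<in> verts H" and y: "y \<in> verts H" and "r x < l y" for x y
  proof -
    have "l x \<le> r x" "l y \<le> r y" "r p \<le> r x" "l y \<le> l q"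
      using lr p(2) q(2) x y by blast+
    with \<open>r x < l y\<close> have "x \<noteq> y" "r p < l y" "r x < l q" "p \<noteq> y" "x \<noteq> q"
      by auto
    then have "{x, y} \<in> edges G"
      using edge_iff x y \<open>r x < l y\<close> HG by blast
    show ?thesis
    proof (cases "x = p \<or> y = q")
      case True
      with \<open>{x, y} \<in> edges G\<close> show ?thesis
        by (auto simp: edges_big_ant incident_def)
    next
      case False
      from \<open>p \<noteq> y\<close> \<open>x \<noteq> q\<close> \<open>r p < l y\<close> \<open>r x < l q\<close> have "{p, y} \<in> edges H" "{x, q} \<in> edges H"
        using edge_iff p(1) q(1) x y by blast+
      then have "{y, p} \<in> edges G" "{q, x} \<in> edges G"
        using HG by (auto simp: insert_commute)
      moreover have "distinct [p, q, x, y]"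
        using False Q(4) \<open>p \<noteq> y\<close> \<open>x \<noteq> q\<close> \<open>x \<noteq> y\<close> by auto
      ultimately have "{x, y} \<in> edges Q"
        using ear_in_block[OF G Q(1-3)] \<open>{x, y} \<in> edges G\<close> by blast
      then show ?thesis
        by (simp add: edges_big_ant)
    qed
  qed
  show ?thesis
  proof
    fix e assume "e \<in> edges H"
    moreover have "graph H"
      using H(1) by (simp add: subgraph_def)
    ultimately obtain x y where "x \<noteq> y" "e = {x, y}" "x \<in> verts H" "y \<in> verts H"
      by (blast elim: graph_edgeE)
    with \<open>e \<in> edges H\<close> have "r x < l y \<or> r y < l x"
      using edge_iff by blast
    then have "{x, y} \<in> edges (big_ant G Q p q) \<or> {y, x} \<in> edges (big_ant G Q p q)"
      using left_right \<open>x \<in> verts H\<close> \<open>y \<in> verts H\<close> by blast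
    with \<open>e = {x, y}\<close> show "e \<in> edges (big_ant G Q p q)"
      by (auto simp: insert_commute)
  qed
qed

theorem lemma10:
  fixes G H :: "'a graph"
  assumes "block_graph G"
    and "edges G \<noteq> {}"
    and "max_co_interval_subgraph G H"
  shows "\<exists>Q u v. block G Q \<and> u \<in> verts Q \<and> v \<in> verts Q \<and> edges H = edges (big_ant G Q u v)"
proof -
  have G: "graph G"
    using assms(1) by (simp add: block_graph_def)
  have H: "subgraph H G" "co_interval H"
    using assms(3) by (simp_all add: max_co_interval_subgraph_def)
  then have "graph H"
    by (simp add: subgraph_def)
  obtain l r where model: "co_interval_model H l r"
    using H(2) co_interval_iff_model by blast
  have "edges H \<noteq> {}"
    by (rule max_co_interval_subgraph_edges_nonempty[OF G assms(2,3)])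
  then obtain p q where pq: "{p, q} \<in> edges H" "p \<noteq> q" "p \<in> verts H" "q \<in> verts H"
    and extreme: "\<forall>x\<in>verts H. r p \<le> r x" "\<forall>x\<in>verts H. l x \<le> l q"
    using co_interval_model_extremes[OF \<open>graph H\<close> model] by blast
  have "{p, q} \<in> edges G"
    using H(1) pq(1) by (auto simp: subgraph_def)
  then obtain Q where Q: "block G Q" "p \<in> verts Q" "q \<in> verts Q"
    using block_containing_edge[OF G _ pq(2)] by blast
  have "subgraph Q G" "complete Q"
    using Q(1) assms(1) blockD unfolding block_graph_def by blast+
  then have "subgraph (big_ant G Q p q) G" "co_interval (big_ant G Q p q)"
    using subgraph_big_ant[OF G] co_interval_big_ant[OF G] Q(2,3) by simp_all
  moreover have "edges H \<subseteq> edges (big_ant G Q p q)"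
    using edges_subset_big_ant[OF G H(1) model Q pq(2) pq(3) extreme(1) pq(4) extreme(2)] .
  ultimately have "edges H = edges (big_ant G Q p q)"
    using max_co_interval_subgraphD[OF assms(3)] by blast
  with Q show ?thesis
    by blast
qed

end
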